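(* For every typed DAG task $G=(V,E,\gamma,c)$ and every platform with $M_s\ge1$ cores of each type $s\in S$, \[ len(\hat G)+\sum_{s\in S}\frac{vol_s(G)}{M_s}\;\le\;\Big(1-\frac{1}{\max_{s\in S}M_s}\Big)len(G)+\sum_{s\in S}\frac{vol_s(G)}{M_s}, \] and there exist typed DAG tasks and platforms for which this inequality is strict.
   Context: A typed DAG task is $G=(V,E,\gamma,c)$ where $(V,E)$ is a finite directed acyclic graph with a unique source and a unique sink, $S$ is a finite set of core types, $\gamma:V\to S$ gives the type of each vertex, and $c:V\to\mathbb{R}_{\ge0}$ gives the WCET of each vertex. The platform has $M_s\ge1$ cores of type $s$. $vol_s(G)=\sum_{u\in V,\gamma(u)=s}c(u)$. For a path $\pi$, $len(\pi)=\sum_{u\in\pi}c(u)$ and $len(G)$ is the maximum of $len(\pi)$ over paths of $G$. The scaled graph $\hat G$ has the same vertices, edges and types as $G$ with weights $\hat c(v)=c(v)(1-1/M_{\gamma(v)})$, and $len(\hat G)$ is its longest path length with respect to $\hat c$. (The left-hand side is the bound called NEW-B-1, the right-hand side the earlier bound called OLD-B; the paper states "NEW-B-1 strictly dominates OLD-B".) *)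

theory Defs
  imports Complex_Main
begin

definition typed_dag_task ::
  "'v set \<Rightarrow> ('v \<times> 'v) set \<Rightarrow> 's set \<Rightarrow> ('v \<Rightarrow> 's) \<Rightarrow> ('v \<Rightarrow> real) \<Rightarrow> bool" where
  "typed_dag_task V E S gamma c \<longleftrightarrow>
     finite V \<and> E \<subseteq> V \<times> V \<and> acyclic E \<and>
     (\<exists>!v. v \<in> V \<and> (\<forall>u. (u, v) \<notin> E)) \<and>
     (\<exists>!v. v \<in> V \<and> (\<forall>u. (v, u) \<notin> E)) \<and>
     finite S \<and> gamma ` V \<subseteq> S \<and>
     (\<forall>v\<in>V. c v \<ge> 0)"

definition platform :: "'s set \<Rightarrow> ('s \<Rightarrow> nat) \<Rightarrow> bool" where
  "platform S M \<longleftrightarrow> (\<forall>s\<in>S. M s \<ge> 1)"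

definition is_path :: "'v set \<Rightarrow> ('v \<times> 'v) set \<Rightarrow> 'v list \<Rightarrow> bool" where
  "is_path V E p \<longleftrightarrow> p \<noteq> [] \<and> set p \<subseteq> V \<and> successively (\<lambda>x y. (x, y) \<in> E) p"

definition path_len :: "('v \<Rightarrow> real) \<Rightarrow> 'v list \<Rightarrow> real" where
  "path_len w p = sum_list (map w p)"

definition dag_len :: "'v set \<Rightarrow> ('v \<times> 'v) set \<Rightarrow> ('v \<Rightarrow> real) \<Rightarrow> real" where
  "dag_len V E w = Max (path_len w ` {p. is_path V E p})"

definition vol :: "'v set \<Rightarrow> ('v \<Rightarrow> 's) \<Rightarrow> ('v \<Rightarrow> real) \<Rightarrow> 's \<Rightarrow> real" where
  "vol V gamma c s = (\<Sum>u\<in>{u\<in>V. gamma u = s}. c u)"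

definition scaled :: "('v \<Rightarrow> 's) \<Rightarrow> ('v \<Rightarrow> real) \<Rightarrow> ('s \<Rightarrow> nat) \<Rightarrow> 'v \<Rightarrow> real" where
  "scaled gamma c M v = c v * (1 - 1 / real (M (gamma v)))"

definition new_b1 where
  "new_b1 V E S gamma c M =
     dag_len V E (scaled gamma c M) + (\<Sum>s\<in>S. vol V gamma c s / real (M s))"

definition old_b where
  "old_b V E S gamma c M =
     (1 - 1 / real (Max (M ` S))) * dag_len V E c + (\<Sum>s\<in>S. vol V gamma c s / real (M s))"

end

theory Submission
  imports Defs
begin

text \<open>Each scaled weight satisfies c(v)(1 - 1/M_{gamma v}) \<le> (1 - 1/max M) c(v), so scaling
  every path of G by the uniform factor 1 - 1/max M dominates its scaled length, while the volume
  terms of the two bounds coincide. The gap appears when the critical path avoids the types with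
  the most cores: a single unit vertex of a type with one core, next to an unused type with two
  cores, gives NEW-B-1 = 1 but OLD-B = 3/2.\<close>

lemma distinct_if_successively_acyclic:
  assumes "acyclic E" and "successively (\<lambda>x y. (x, y) \<in> E) xs"
  shows "distinct xs"
proof -
  have "successively (\<lambda>x y. (x, y) \<in> E\<^sup>+) xs"
    using assms(2) by (rule successively_mono) auto
  then have "sorted_wrt (\<lambda>x y. (x, y) \<in> E\<^sup>+) xs"
    by (subst (asm) successively_conv_sorted_wrt) (auto simp: transp_def)
  then show ?thesis
    using assms(1) by (induction xs) (auto simp: acyclic_def)
qed

lemma finite_paths:
  assumes "finite V" and "acyclic E"
  shows "finite {p. is_path V E p}"
proof (rule finite_subset)
  show "{p. is_path V E p} \<subseteq> {xs. set xs \<subseteq> V \<and> length xs \<le> card V}"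
  proof safe
    fix p assume "is_path V E p"
    then have p: "set p \<subseteq> V" "successively (\<lambda>x y. (x, y) \<in> E) p"
      by (auto simp: is_path_def)
    then show "x \<in> V" if "x \<in> set p" for x
      using that by blast
    have "length p = card (set p)"
      using distinct_if_successively_acyclic[OF assms(2) p(2)] by (simp add: distinct_card)
    also have "\<dots> \<le> card V"
      using p(1) assms(1) by (simp add: card_mono)
    finally show "length p \<le> card V" .
  qed
  show "finite {xs. set xs \<subseteq> V \<and> length xs \<le> card V}"
    using finite_lists_length_le[OF assms(1)] .
qed

lemma Max_image_le_mult_Max_image:
  fixes f g :: "'a \<Rightarrow> real"
  assumes "finite A" and "A \<noteq> {}" and "0 \<le> a" and "\<And>x. x \<in> A \<Longrightarrow> f x \<le> a * g x"
  shows "Max (f ` A) \<le> a * Max (g ` A)"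
proof (subst Max_le_iff, safe)
  fix x assume "x \<in> A"
  then have "g x \<le> Max (g ` A)"
    using assms(1) by simp
  then show "f x \<le> a * Max (g ` A)"
    using assms(3) assms(4)[OF \<open>x \<in> A\<close>] by (meson mult_left_mono order_trans)
qed (use assms(1,2) in auto)

lemma dag_len_le_mult_dag_len:
  assumes "finite V" and "acyclic E" and "V \<noteq> {}" and "0 \<le> a"
    and "\<And>v. v \<in> V \<Longrightarrow> w v \<le> a * c v"
  shows "dag_len V E w \<le> a * dag_len V E c"
  unfolding dag_len_def
proof (rule Max_image_le_mult_Max_image)
  show "finite {p. is_path V E p}"
    using finite_paths[OF assms(1,2)] .
  obtain v where "v \<in> V"
    using assms(3) by blast
  then have "is_path V E [v]"
    by (simp add: is_path_def)
  then show "{p. is_path V E p} \<noteq> {}"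
    by blast
  fix p assume "p \<in> {p. is_path V E p}"
  then have "set p \<subseteq> V"
    by (simp add: is_path_def)
  then have "(\<Sum>v\<leftarrow>p. w v) \<le> (\<Sum>v\<leftarrow>p. a * c v)"
    using assms(5) by (intro sum_list_mono) blast
  then show "path_len w p \<le> a * path_len c p"
    by (simp add: path_len_def sum_list_const_mult)
qed fact

lemma scaled_le:
  assumes "1 \<le> M (gamma v)" and "M (gamma v) \<le> m" and "0 \<le> c v"
  shows "scaled gamma c M v \<le> (1 - 1 / real m) * c v"
proof -
  have "1 / real m \<le> 1 / real (M (gamma v))"
    using assms(1,2) by (intro divide_left_mono) auto
  then show ?thesis
    unfolding scaled_def using assms(3) by (metis diff_left_mono mult.commute mult_left_mono)
qed

lemma new_b1_le_old_b:
  assumes "typed_dag_task V E S gamma c" and "platform S M"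
  shows "new_b1 V E S gamma c M \<le> old_b V E S gamma c M"
proof -
  from assms(1) have V: "finite V" "acyclic E" "V \<noteq> {}" and S: "finite S" "gamma ` V \<subseteq> S"
    and c: "\<forall>v\<in>V. 0 \<le> c v"
    by (auto simp: typed_dag_task_def)
  have M: "1 \<le> M (gamma v)" "M (gamma v) \<le> Max (M ` S)" if "v \<in> V" for v
    using assms(2) S that by (auto simp: platform_def)
  have "1 \<le> Max (M ` S)"
    using M V(3) by (meson equals0I order_trans)
  then have "0 \<le> 1 - 1 / real (Max (M ` S))"
    by simp
  then have "dag_len V E (scaled gamma c M) \<le> (1 - 1 / real (Max (M ` S))) * dag_len V E c"
    using V M c by (intro dag_len_le_mult_dag_len scaled_le) auto
  then show ?thesis
    unfolding new_b1_def old_b_def by simp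
qed

lemma paths_singleton: "{p. is_path {v} {} p} = {[v]}"
proof safe
  fix p assume "is_path {v} {} p"
  then show "p = [v]"
    by (cases p rule: remdups_adj.cases) (auto simp: is_path_def)
qed (simp add: is_path_def)

lemma dag_len_singleton: "dag_len {v} {} w = w v"
  by (simp add: dag_len_def paths_singleton path_len_def)

lemma new_b1_less_old_b_example:
  defines "M \<equiv> \<lambda>s::nat. if s = 0 then 1 else 2"
  shows "typed_dag_task {0::nat} {} {0, 1} (\<lambda>_. 0) (\<lambda>_. 1)" and "platform {0, 1} M"
    and "new_b1 {0::nat} {} {0, 1} (\<lambda>_. 0) (\<lambda>_. 1) M < old_b {0} {} {0, 1} (\<lambda>_. 0) (\<lambda>_. 1) M"
  by (auto simp: typed_dag_task_def acyclic_def platform_def M_def new_b1_def old_b_def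
      dag_len_singleton scaled_def vol_def)

theorem corollary1:
  shows "(\<forall>(V :: 'v set) (E :: ('v \<times> 'v) set) (S :: 's set) gamma c M.
            typed_dag_task V E S gamma c \<and> platform S M \<longrightarrow>
            new_b1 V E S gamma c M \<le> old_b V E S gamma c M)
       \<and> (\<exists>(V :: nat set) (E :: (nat \<times> nat) set) (S :: nat set) gamma c M.
            typed_dag_task V E S gamma c \<and> platform S M \<and>
            new_b1 V E S gamma c M < old_b V E S gamma c M)"
  using new_b1_le_old_b new_b1_less_old_b_example by blast

end
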